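(* Let $\Sigma$ be a finite alphabet, let $X,Y\subseteq\Sigma^{\mathbb{Z}}$ be shift spaces, and let $\mu$ be a shift-invariant ergodic Borel probability measure on $Y$. Then \[R_0(X,Y,\mu)\le\inf\left\{\nu\big(\{(\mathbf{x},\mathbf{y})\in X\times Y:\mathbf{x}_0\ne\mathbf{y}_0\}\big):\ \nu\in M_{\mathcal{E}}(X,Y,\mu)\right\}.\]
   Context: $T$ is the left shift on $\Sigma^{\mathbb{Z}}$; a shift space is a closed $T$-invariant subset. On $X\times Y$ the shift acts by $T(\mathbf{x},\mathbf{y})=(T\mathbf{x},T\mathbf{y})$. An extension of $\mu$ is a shift-invariant Borel probability measure $\nu$ on $X\times Y$ with $\nu(X\times A)=\mu(A)$ for all measurable $A\subseteq Y$; $M_{\mathcal{E}}(X,Y,\mu)$ is the set of extensions that are ergodic for the shift on $X\times Y$. $\mathscr{B}_n(X)$ is the set of length-$n$ words appearing as consecutive subwords of elements of $X$; $d$ is Hamming distance, $B_r$ the Hamming ball. For $A,C\subseteq\Sigma^n$, a probability measure $\eta$ on $\Sigma^n$ and $\varepsilon>0$: $R_\varepsilon(C,A,\eta)=\min\{r\in\mathbb{Z}_{\ge0}:\eta(A\cap\bigcup_{\overline{x}\in C}B_r(\overline{x}))\ge1-\varepsilon\}$. With $\mu_n$ the marginal of $\mu$ on coordinates $0,\dots,n-1$: $R_\varepsilon(X,Y,\mu)=\liminf_n\frac1nR_\varepsilon(\mathscr{B}_n(X),\mathscr{B}_n(Y),\mu_n)$, and $R_0(X,Y,\mu)=\lim_{\varepsilon\to0}R_\varepsilon(X,Y,\mu)$.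 *)

theory Defs
  imports "HOL-Probability.Probability"
begin

definition shift :: "(int \<Rightarrow> 'a) \<Rightarrow> (int \<Rightarrow> 'a)" where
  "shift x = (\<lambda>i. x (i + 1))"

definition shift2 :: "(int \<Rightarrow> 'a) \<times> (int \<Rightarrow> 'a) \<Rightarrow> (int \<Rightarrow> 'a) \<times> (int \<Rightarrow> 'a)" where
  "shift2 p = (shift (fst p), shift (snd p))"

definition seq_topology :: "(int \<Rightarrow> 'a) topology" where
  "seq_topology = product_topology (\<lambda>_. discrete_topology UNIV) UNIV"

definition shift_space :: "(int \<Rightarrow> 'a) set \<Rightarrow> bool" where
  "shift_space X \<longleftrightarrow> closedin seq_topology X \<and> shift ` X = X"

(* Borel sigma-algebra on \<Sigma>^\<int> = product sigma-algebra of the discrete ones *)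
definition seq_M :: "(int \<Rightarrow> 'a) measure" where
  "seq_M = PiM UNIV (\<lambda>_. count_space UNIV)"

definition invariant_measure :: "'b measure \<Rightarrow> ('b \<Rightarrow> 'b) \<Rightarrow> bool" where
  "invariant_measure M f \<longleftrightarrow> f \<in> M \<rightarrow>\<^sub>M M \<and> distr M M f = M"

definition ergodic_measure :: "'b measure \<Rightarrow> ('b \<Rightarrow> 'b) \<Rightarrow> bool" where
  "ergodic_measure M f \<longleftrightarrow> invariant_measure M f \<and>
     (\<forall>A\<in>sets M. f -` A \<inter> space M = A \<longrightarrow> measure M A = 0 \<or> measure M A = 1)"

(* shift-invariant ergodic Borel probability measure on Y (as a measure on \<Sigma>^\<int> with full mass on Y) *)
definition ergodic_on :: "(int \<Rightarrow> 'a) set \<Rightarrow> (int \<Rightarrow> 'a) measure \<Rightarrow> bool" where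
  "ergodic_on Y \<mu> \<longleftrightarrow> sets \<mu> = sets seq_M \<and> prob_space \<mu> \<and> emeasure \<mu> Y = 1 \<and>
     ergodic_measure \<mu> shift"

definition ergodic_extensions ::
  "(int \<Rightarrow> 'a) set \<Rightarrow> (int \<Rightarrow> 'a) set \<Rightarrow> (int \<Rightarrow> 'a) measure
     \<Rightarrow> ((int \<Rightarrow> 'a) \<times> (int \<Rightarrow> 'a)) measure set" where
  "ergodic_extensions X Y \<mu> = {\<nu>. sets \<nu> = sets (seq_M \<Otimes>\<^sub>M seq_M) \<and> prob_space \<nu> \<and>
     emeasure \<nu> (X \<times> Y) = 1 \<and> ergodic_measure \<nu> shift2 \<and>
     (\<forall>A\<in>sets seq_M. A \<subseteq> Y \<longrightarrow> measure \<nu> (X \<times> A) = measure \<mu> A)}"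

definition subword :: "(int \<Rightarrow> 'a) \<Rightarrow> int \<Rightarrow> nat \<Rightarrow> 'a list" where
  "subword x i n = map (\<lambda>j. x (i + int j)) [0..<n]"

definition language :: "(int \<Rightarrow> 'a) set \<Rightarrow> nat \<Rightarrow> 'a list set" where
  "language X n = {subword x i n | x i. x \<in> X}"

definition marginal :: "(int \<Rightarrow> 'a) measure \<Rightarrow> nat \<Rightarrow> 'a list set \<Rightarrow> real" where
  "marginal \<mu> n S = measure \<mu> {x \<in> space \<mu>. subword x 0 n \<in> S}"

definition hamming :: "'a list \<Rightarrow> 'a list \<Rightarrow> nat" where
  "hamming u v = card {i. i < length u \<and> u ! i \<noteq> v ! i}"

definition hball :: "'a list \<Rightarrow> nat \<Rightarrow> 'a list set" where
  "hball v r = {u. length u = length v \<and> hamming u v \<le> r}"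

(* R_eps(C,A,eta); the minimum of an empty set is +\<infinity> *)
definition R_words :: "real \<Rightarrow> 'a list set \<Rightarrow> 'a list set \<Rightarrow> ('a list set \<Rightarrow> real) \<Rightarrow> ereal" where
  "R_words \<epsilon> C A \<eta> = Inf {ereal (real r) | r::nat. \<eta> (A \<inter> (\<Union>c\<in>C. hball c r)) \<ge> 1 - \<epsilon>}"

definition R_rate :: "real \<Rightarrow> (int \<Rightarrow> 'a) set \<Rightarrow> (int \<Rightarrow> 'a) set \<Rightarrow> (int \<Rightarrow> 'a) measure \<Rightarrow> ereal" where
  "R_rate \<epsilon> X Y \<mu> =
     liminf (\<lambda>n. R_words \<epsilon> (language X n) (language Y n) (marginal \<mu> n) / ereal (real n))"

definition R_zero :: "(int \<Rightarrow> 'a) set \<Rightarrow> (int \<Rightarrow> 'a) set \<Rightarrow> (int \<Rightarrow> 'a) measure \<Rightarrow> ereal" where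
  "R_zero X Y \<mu> = Lim (at_right 0) (\<lambda>\<epsilon>. R_rate \<epsilon> X Y \<mu>)"

end

theory Submission
  imports Defs
begin

(*
  Fix an ergodic extension \<nu> and let D \<subseteq> X \<times> Y be the set of pairs that disagree at
  coordinate 0, with d = \<nu>(D).  Along the orbit of (x, y) under the product shift, the Birkhoff
  sum S\<^sub>n of D is the Hamming distance between the first n symbols of x and of y.  The weak
  ergodic theorem \<nu>{S\<^sub>n \<ge> (d + \<delta>) n} \<longrightarrow> 0 follows from ergodicity and the maximal inequality
  c \<nu>{limsup S\<^sub>n/n > c} \<le> \<nu>(D), which is proved by cutting orbit segments into blocks on which
  the average of D exceeds c.  So for large n, off a set of \<nu>-measure below \<epsilon>, the word y[0,n)
  lies within Hamming distance (d + \<delta>) n of the X-word x[0,n); since \<nu> projects onto \<mu>, these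
  Y-words carry \<mu>\<^sub>n-mass at least 1 - \<epsilon>, whence R\<^sub>\<epsilon> \<le> d + \<delta>.  As R\<^sub>\<epsilon> is antitone in \<epsilon>,
  R\<^sub>0 is its supremum over \<epsilon> > 0.
*)

lemma sum_lower_bound_by_blocks:
  fixes a :: "nat \<Rightarrow> real"
  assumes nonneg: "\<And>j. 0 \<le> a j" and "0 \<le> h"
    and blocks: "\<And>k. \<exists>t\<ge>1. t \<le> N \<and> real t * h \<le> (\<Sum>j<t. a (k + j))"
  shows "(real m - real N) * h \<le> (\<Sum>j<m. a (k + j))"
proof (induction m arbitrary: k rule: less_induct)
  case (less m)
  show ?case
  proof (cases "m \<le> N")
    case True
    then have "(real m - real N) * h \<le> 0"
      using \<open>0 \<le> h\<close> by (simp add: mult_nonpos_nonneg)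
    also have "0 \<le> (\<Sum>j<m. a (k + j))"
      by (simp add: nonneg sum_nonneg)
    finally show ?thesis .
  next
    case False
    obtain t where t: "1 \<le> t" "t \<le> N" "real t * h \<le> (\<Sum>j<t. a (k + j))"
      using blocks by blast
    have sum_split: "(\<Sum>j<t + r. a (k + j)) = (\<Sum>j<t. a (k + j)) + (\<Sum>j<r. a (k + t + j))" for r
      by (induction r) (simp_all add: add.assoc)
    have "(real (m - t) - real N) * h \<le> (\<Sum>j<m - t. a (k + t + j))"
      using less.IH[of "m - t" "k + t"] t False by simp
    with t False sum_split[of "m - t"] show ?thesis
      by (simp add: algebra_simps)
  qed
qed

definition birkhoff_sum :: "('a \<Rightarrow> 'a) \<Rightarrow> 'a set \<Rightarrow> nat \<Rightarrow> 'a \<Rightarrow> real" where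
  "birkhoff_sum T D n x = (\<Sum>j<n. indicator D ((T ^^ j) x))"

definition upper_frequency :: "('a \<Rightarrow> 'a) \<Rightarrow> 'a set \<Rightarrow> 'a \<Rightarrow> ereal" where
  "upper_frequency T D x = limsup (\<lambda>n. ereal (birkhoff_sum T D n x / real n))"

lemma birkhoff_sum_apply_diff: "\<bar>birkhoff_sum T D n (T x) - birkhoff_sum T D n x\<bar> \<le> 1"
proof -
  have "birkhoff_sum T D (Suc n) x = indicator D x + birkhoff_sum T D n (T x)"
    unfolding birkhoff_sum_def sum.lessThan_Suc_shift by (simp add: funpow_Suc_right del: funpow.simps)
  moreover have "birkhoff_sum T D (Suc n) x = birkhoff_sum T D n x + indicator D ((T ^^ n) x)"
    unfolding birkhoff_sum_def by simp
  ultimately show ?thesis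
    by (cases "x \<in> D"; cases "(T ^^ n) x \<in> D") auto
qed

lemma upper_frequency_apply: "upper_frequency T D (T x) = upper_frequency T D x"
proof -
  define u where "u n = (birkhoff_sum T D n (T x) - birkhoff_sum T D n x) / real n" for n
  have "u \<longlonglongrightarrow> 0"
  proof (rule Lim_null_comparison)
    show "\<forall>\<^sub>F n in sequentially. norm (u n) \<le> 1 / real n"
      by (simp add: u_def abs_divide divide_right_mono[OF birkhoff_sum_apply_diff])
  qed (rule lim_const_over_n)
  then have "(\<lambda>n. ereal (u n)) \<longlonglongrightarrow> 0"
    by (simp add: zero_ereal_def)
  then have "limsup (\<lambda>n. ereal (u n) + ereal (birkhoff_sum T D n x / real n)) = upper_frequency T D x"
    unfolding upper_frequency_def by (subst ereal_limsup_lim_add) auto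
  moreover have "ereal (u n) + ereal (birkhoff_sum T D n x / real n) = ereal (birkhoff_sum T D n (T x) / real n)" for n
    by (simp add: u_def diff_divide_distrib)
  ultimately show ?thesis
    unfolding upper_frequency_def by simp
qed

lemma upper_frequency_less_imp_eventually:
  assumes "upper_frequency T D x < ereal c"
  shows "\<forall>\<^sub>F n in sequentially. birkhoff_sum T D n x / real n < c"
  using Limsup_lessD[OF assms[unfolded upper_frequency_def]] by simp

lemma less_upper_frequency_imp_frequently:
  assumes "ereal c < upper_frequency T D x"
  shows "\<exists>n\<ge>1. real n * c < birkhoff_sum T D n x"
proof -
  have "\<exists>\<^sub>F n in sequentially. c < birkhoff_sum T D n x / real n"
  proof (rule ccontr)
    assume "\<not> (\<exists>\<^sub>F n in sequentially. c < birkhoff_sum T D n x / real n)"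
    then have "upper_frequency T D x \<le> ereal c"
      unfolding upper_frequency_def by (intro Limsup_bounded) (simp add: not_frequently not_less)
    with assms show False
      by simp
  qed
  then obtain n where "n \<ge> 1" "c < birkhoff_sum T D n x / real n"
    unfolding frequently_sequentially by blast
  then show ?thesis
    by (auto simp: field_simps)
qed

locale measure_preserving_system = prob_space M for M +
  fixes T
  assumes invariant: "invariant_measure M T"
begin

lemma T_measurable[measurable]: "T \<in> M \<rightarrow>\<^sub>M M"
  using invariant by (simp add: invariant_measure_def)

lemma distr_T: "distr M M T = M"
  using invariant by (simp add: invariant_measure_def)

lemma funpow_T_measurable[measurable]: "T ^^ n \<in> M \<rightarrow>\<^sub>M M"
  by (induction n) auto

lemma distr_funpow_T: "distr M M (T ^^ n) = M"
proof (induction n)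
  case (Suc n)
  have "distr M M (T ^^ Suc n) = distr (distr M M (T ^^ n)) M T"
    by (subst distr_distr) (auto simp: comp_def)
  then show ?case
    by (simp only: Suc.IH distr_T)
qed (simp add: distr_id[unfolded id_def])

lemma integral_funpow_T:
  fixes f :: "_ \<Rightarrow> real"
  assumes [measurable]: "f \<in> borel_measurable M"
  shows "(\<integral>x. f ((T ^^ n) x) \<partial>M) = integral\<^sup>L M f"
  using integral_distr[of "T ^^ n" M M f] by (simp add: distr_funpow_T)

lemma birkhoff_sum_measurable[measurable]:
  "D \<in> sets M \<Longrightarrow> birkhoff_sum T D n \<in> borel_measurable M"
  unfolding birkhoff_sum_def
  by (intro borel_measurable_sum measurable_compose[OF funpow_T_measurable borel_measurable_indicator])

lemma upper_frequency_measurable[measurable]: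
  "D \<in> sets M \<Longrightarrow> upper_frequency T D \<in> borel_measurable M"
  unfolding upper_frequency_def by (intro borel_measurable_limsup) auto

definition frequent_set :: "'a set \<Rightarrow> real \<Rightarrow> 'a set" where
  "frequent_set D c = {x \<in> space M. ereal c < upper_frequency T D x}"

lemma frequent_set_sets[measurable]: "D \<in> sets M \<Longrightarrow> frequent_set D c \<in> sets M"
  unfolding frequent_set_def by measurable

lemma vimage_frequent_set: "T -` frequent_set D c \<inter> space M = frequent_set D c"
  using measurable_space[OF T_measurable] by (auto simp: frequent_set_def upper_frequency_apply)

lemma funpow_T_frequent_set: "x \<in> frequent_set D c \<Longrightarrow> (T ^^ n) x \<in> frequent_set D c"
  using vimage_frequent_set[of D c] by (induction n) auto

definition late_set :: "'a set \<Rightarrow> real \<Rightarrow> nat \<Rightarrow> 'a set" where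
  "late_set D c N = {x \<in> frequent_set D c. \<forall>n\<in>{1..N}. birkhoff_sum T D n x \<le> real n * c}"

lemma late_set_sets[measurable]: "D \<in> sets M \<Longrightarrow> late_set D c N \<in> sets M"
proof -
  assume [measurable]: "D \<in> sets M"
  have "late_set D c N = frequent_set D c \<inter> {x \<in> space M. \<forall>n\<in>{1..N}. birkhoff_sum T D n x \<le> real n * c}"
    by (auto simp: late_set_def frequent_set_def)
  also have "\<dots> \<in> sets M"
    by measurable
  finally show ?thesis .
qed

lemma measure_late_set_tendsto_0:
  assumes "D \<in> sets M"
  shows "(\<lambda>N. measure M (late_set D c N)) \<longlonglongrightarrow> 0"
proof -
  have "decseq (late_set D c)"
    unfolding decseq_def late_set_def by auto
  moreover have "(\<Inter>N. late_set D c N) = {}"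
  proof (rule equals0I)
    fix x
    assume x: "x \<in> (\<Inter>N. late_set D c N)"
    then have "x \<in> frequent_set D c"
      by (simp add: late_set_def)
    then obtain n where "1 \<le> n" "real n * c < birkhoff_sum T D n x"
      using less_upper_frequency_imp_frequently[of c T D x] by (auto simp: frequent_set_def)
    moreover from x have "\<forall>m\<in>{1..n}. birkhoff_sum T D m x \<le> real m * c"
      unfolding late_set_def by blast
    ultimately show False
      by (meson atLeastAtMost_iff not_le order_refl)
  qed
  moreover have "range (late_set D c) \<subseteq> sets M"
    using late_set_sets[OF assms] by blast
  ultimately show ?thesis
    using finite_Lim_measure_decseq[of "late_set D c"] by simp
qed

lemma birkhoff_sum_lower_bound_on_frequent_set:
  assumes "0 < c" "1 \<le> N" "x \<in> frequent_set D c"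
  shows "(real L - real N) * c
    \<le> (\<Sum>j<L. indicator D ((T ^^ j) x) + c * indicator (late_set D c N) ((T ^^ j) x))"
proof -
  define f where "f y = indicator D y + c * indicator (late_set D c N) y" for y
  have f_nonneg: "0 \<le> f y" for y
    using \<open>0 < c\<close> by (simp add: f_def)
  \<comment> \<open>An orbit point in the late set is a block of length 1 carrying weight c;
    from any other orbit point the average of D exceeds c within N steps.\<close>
  have "\<exists>t\<ge>1. t \<le> N \<and> real t * c \<le> (\<Sum>j<t. f ((T ^^ (k + j)) x))" for k
  proof -
    define y where "y = (T ^^ k) x"
    have orbit: "(T ^^ (k + j)) x = (T ^^ j) y" for j
      by (simp add: y_def funpow_add add.commute)
    show ?thesis
    proof (cases "y \<in> late_set D c N")
      case True
      then have "c \<le> f y"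
        by (simp add: f_def)
      with \<open>1 \<le> N\<close> show ?thesis
        by (intro exI[of _ 1]) (simp add: y_def)
    next
      case False
      moreover have "y \<in> frequent_set D c"
        using assms(3) by (simp add: y_def funpow_T_frequent_set)
      ultimately obtain n where n: "n \<in> {1..N}" and exceeds: "real n * c < birkhoff_sum T D n y"
        by (auto simp: late_set_def not_le)
      have "birkhoff_sum T D n y \<le> (\<Sum>j<n. f ((T ^^ j) y))"
        unfolding birkhoff_sum_def using \<open>0 < c\<close> by (intro sum_mono) (simp add: f_def)
      with exceeds n show ?thesis
        by (intro exI[of _ n]) (simp add: orbit)
    qed
  qed
  then have "(real L - real N) * c \<le> (\<Sum>j<L. f ((T ^^ (0 + j)) x))"
    using f_nonneg \<open>0 < c\<close> by (intro sum_lower_bound_by_blocks) auto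
  then show ?thesis
    by (simp add: f_def)
qed

lemma measure_frequent_set_bound:
  assumes [measurable]: "D \<in> sets M" and "0 < c" "1 \<le> N"
  shows "(real L - real N) * c * measure M (frequent_set D c)
    \<le> real L * (measure M D + c * measure M (late_set D c N))"
proof -
  define f where "f y = indicator D y + c * indicator (late_set D c N) y" for y
  have [measurable]: "f \<in> borel_measurable M"
    unfolding f_def by measurable
  have f_integrable: "integrable M (\<lambda>x. f ((T ^^ j) x))" for j
    using \<open>0 < c\<close>
    by (intro integrable_const_bound[where B="1 + c"] AE_I2) (auto simp: f_def indicator_def)
  have "(real L - real N) * c * measure M (frequent_set D c)
      = (\<integral>x. (real L - real N) * c * indicator (frequent_set D c) x \<partial>M)"
    by (simp add: Int_absorb2 sets.sets_into_space)
  also have "\<dots> \<le> (\<integral>x. (\<Sum>j<L. f ((T ^^ j) x)) \<partial>M)"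
  proof (rule integral_mono)
    show "integrable M (\<lambda>x. (real L - real N) * c * indicator (frequent_set D c) x)"
      by (simp add: less_top[symmetric])
    show "(real L - real N) * c * indicator (frequent_set D c) x \<le> (\<Sum>j<L. f ((T ^^ j) x))" for x
      using birkhoff_sum_lower_bound_on_frequent_set[OF \<open>0 < c\<close> \<open>1 \<le> N\<close>, of x D L] \<open>0 < c\<close>
      by (cases "x \<in> frequent_set D c") (auto simp: f_def intro: sum_nonneg)
  qed (use f_integrable in auto)
  also have "\<dots> = real L * integral\<^sup>L M f"
    by (simp add: f_integrable integral_funpow_T)
  also have "integral\<^sup>L M f = measure M D + c * measure M (late_set D c N)"
    unfolding f_def
    by (subst Bochner_Integration.integral_add) (auto simp: less_top[symmetric] Int_absorb2 sets.sets_into_space)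
  finally show ?thesis .
qed

lemma maximal_inequality:
  assumes [measurable]: "D \<in> sets M" and "0 < c"
  shows "c * measure M (frequent_set D c) \<le> measure M D"
proof -
  have bound: "c * measure M (frequent_set D c) \<le> measure M D + c * measure M (late_set D c N)"
    if "1 \<le> N" for N
  proof (rule LIMSEQ_le_const2)
    show "(\<lambda>L. (1 - real N / real L) * (c * measure M (frequent_set D c)))
        \<longlonglongrightarrow> c * measure M (frequent_set D c)"
      by (auto intro!: tendsto_eq_intros lim_const_over_n)
    show "\<exists>L0. \<forall>L\<ge>L0. (1 - real N / real L) * (c * measure M (frequent_set D c))
        \<le> measure M D + c * measure M (late_set D c N)"
    proof (intro exI[of _ 1] allI impI)
      fix L :: nat
      assume "1 \<le> L"
      with measure_frequent_set_bound[OF _ \<open>0 < c\<close> that, of D L]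
      show "(1 - real N / real L) * (c * measure M (frequent_set D c))
          \<le> measure M D + c * measure M (late_set D c N)"
        by (simp add: field_simps)
    qed
  qed
  have "(\<lambda>N. measure M D + c * measure M (late_set D c N)) \<longlonglongrightarrow> measure M D + c * 0"
    by (intro tendsto_intros measure_late_set_tendsto_0) simp
  then have "(\<lambda>N. measure M D + c * measure M (late_set D c N)) \<longlonglongrightarrow> measure M D"
    by simp
  then show ?thesis
    by (rule LIMSEQ_le_const) (use bound in \<open>auto intro: exI[of _ 1]\<close>)
qed

end

locale ergodic_system = measure_preserving_system +
  assumes invariant_set_trivial:
    "A \<in> sets M \<Longrightarrow> T -` A \<inter> space M = A \<Longrightarrow> measure M A = 0 \<or> measure M A = 1"
begin

lemma AE_eventually_birkhoff_average_less:
  assumes [measurable]: "D \<in> sets M" and "measure M D < c"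
  shows "AE x in M. \<forall>\<^sub>F n in sequentially. birkhoff_sum T D n x / real n < c"
proof -
  obtain c' where c': "measure M D < c'" "c' < c"
    using dense[OF \<open>measure M D < c\<close>] by blast
  then have "0 < c'"
    using measure_nonneg[of M D] by linarith
  with c' maximal_inequality[of D c'] have "measure M (frequent_set D c') \<noteq> 1"
    by auto
  then have "measure M (frequent_set D c') = 0"
    using invariant_set_trivial[OF frequent_set_sets[OF assms(1)] vimage_frequent_set] by auto
  then have "frequent_set D c' \<in> null_sets M"
    by (simp add: null_sets_def emeasure_eq_measure)
  then have "AE x in M. x \<notin> frequent_set D c'"
    by (rule AE_not_in)
  then show ?thesis
  proof (rule AE_mp, intro AE_I2 impI)
    fix x
    assume "x \<in> space M" "x \<notin> frequent_set D c'"
    then have "upper_frequency T D x < ereal c"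
      using \<open>c' < c\<close> by (auto simp: frequent_set_def not_less intro: le_less_trans)
    then show "\<forall>\<^sub>F n in sequentially. birkhoff_sum T D n x / real n < c"
      by (rule upper_frequency_less_imp_eventually)
  qed
qed

lemma measure_birkhoff_average_ge_tendsto_0:
  assumes [measurable]: "D \<in> sets M" and "measure M D < c"
  shows "(\<lambda>n. measure M {x \<in> space M. c \<le> birkhoff_sum T D n x / real n}) \<longlonglongrightarrow> 0"
proof -
  define B where "B n = {x \<in> space M. c \<le> birkhoff_sum T D n x / real n}" for n
  have [measurable]: "B n \<in> sets M" for n
    unfolding B_def by measurable
  have "(\<lambda>n. \<integral>x. indicator (B n) x \<partial>M) \<longlonglongrightarrow> (\<integral>x. 0 \<partial>M :: real)"
  proof (rule integral_dominated_convergence[where w="\<lambda>_. 1"])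
    show "AE x in M. (\<lambda>n. indicator (B n) x :: real) \<longlonglongrightarrow> 0"
      using AE_eventually_birkhoff_average_less[OF assms]
    proof (rule AE_mp, intro AE_I2 impI)
      fix x
      assume "\<forall>\<^sub>F n in sequentially. birkhoff_sum T D n x / real n < c"
      then have "\<forall>\<^sub>F n in sequentially. (indicator (B n) x :: real) = 0"
        by eventually_elim (auto simp: B_def)
      then show "(\<lambda>n. indicator (B n) x :: real) \<longlonglongrightarrow> 0"
        by (rule tendsto_eventually)
    qed
  qed auto
  then show ?thesis
    by (simp add: B_def)
qed

end

lemma space_seq_M: "space seq_M = UNIV"
  by (simp add: seq_M_def space_PiM)

lemma coordinate_measurable[measurable]: "(\<lambda>x. x i) \<in> seq_M \<rightarrow>\<^sub>M count_space UNIV"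
  unfolding seq_M_def by (rule measurable_component_singleton) simp

lemma length_subword[simp]: "length (subword x i n) = n"
  by (simp add: subword_def)

lemma nth_subword[simp]: "j < n \<Longrightarrow> subword x i n ! j = x (i + int j)"
  by (simp add: subword_def)

lemma subword_eq_iff: "subword x i n = w \<longleftrightarrow> length w = n \<and> (\<forall>j<n. x (i + int j) = w ! j)"
  unfolding subword_def list_eq_iff_nth_eq by auto

lemma subword_measurable[measurable]:
  "(\<lambda>x. subword x i n) \<in> (seq_M :: (int \<Rightarrow> 'a::finite) measure) \<rightarrow>\<^sub>M count_space UNIV"
proof (subst measurable_count_space_eq2_countable, intro conjI ballI)
  fix w :: "'a list"
  have "(\<lambda>x. subword x i n) -` {w} \<inter> space seq_M
      = {x \<in> space seq_M. length w = n \<and> (\<forall>j\<in>{..<n}. x (i + int j) = w ! j)}"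
    by (auto simp: subword_eq_iff)
  also have "\<dots> \<in> sets seq_M"
    by measurable
  finally show "(\<lambda>x. subword x i n) -` {w} \<inter> space seq_M \<in> sets seq_M" .
qed auto

lemma mismatch_set_sets:
  fixes X Y :: "(int \<Rightarrow> 'a::finite) set"
  assumes "\<nu> \<in> ergodic_extensions X Y \<mu>"
  shows "{(x, y) \<in> X \<times> Y. x 0 \<noteq> y 0} \<in> sets \<nu>"
proof -
  have sets_\<nu>: "sets \<nu> = sets (seq_M \<Otimes>\<^sub>M seq_M)"
    using assms by (simp add: ergodic_extensions_def)
  have "X \<times> Y \<in> sets \<nu>"
    using assms emeasure_notin_sets[of "X \<times> Y" \<nu>] by (auto simp: ergodic_extensions_def)
  have "{p \<in> space (seq_M \<Otimes>\<^sub>M seq_M). \<exists>a::'a. fst p 0 = a \<and> snd p 0 \<noteq> a} \<in> sets \<nu>"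
    unfolding sets_\<nu> by measurable
  with \<open>X \<times> Y \<in> sets \<nu>\<close>
  have "(X \<times> Y) \<inter> {p \<in> space (seq_M \<Otimes>\<^sub>M seq_M). \<exists>a. fst p 0 = a \<and> snd p 0 \<noteq> a} \<in> sets \<nu>"
    by blast
  also have "(X \<times> Y) \<inter> {p \<in> space (seq_M \<Otimes>\<^sub>M seq_M). \<exists>a. fst p 0 = a \<and> snd p 0 \<noteq> a}
      = {(x, y) \<in> X \<times> Y. x 0 \<noteq> y 0}"
    by (auto simp: space_pair_measure space_seq_M)
  finally show ?thesis .
qed

lemma funpow_shift: "(shift ^^ j) x = (\<lambda>i. x (i + int j))"
  by (induction j arbitrary: x) (simp_all add: shift_def funpow_Suc_right algebra_simps del: funpow.simps)

lemma funpow_shift2: "(shift2 ^^ j) (x, y) = ((shift ^^ j) x, (shift ^^ j) y)"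
  by (induction j) (auto simp: shift2_def)

lemma shift_space_funpow_shift: "shift_space X \<Longrightarrow> x \<in> X \<Longrightarrow> (shift ^^ j) x \<in> X"
  by (induction j) (auto simp: shift_space_def)

lemma subword_in_language: "x \<in> X \<Longrightarrow> subword x i n \<in> language X n"
  unfolding language_def by blast

lemma birkhoff_sum_mismatch_eq_hamming:
  assumes "shift_space X" "shift_space Y" "x \<in> X" "y \<in> Y"
  shows "birkhoff_sum shift2 {(x, y) \<in> X \<times> Y. x 0 \<noteq> y 0} n (x, y)
    = real (hamming (subword y 0 n) (subword x 0 n))"
proof -
  have "(shift2 ^^ j) (x, y) \<in> {(x, y) \<in> X \<times> Y. x 0 \<noteq> y 0} \<longleftrightarrow> j \<in> {j. x (int j) \<noteq> y (int j)}" for j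
    using assms by (simp add: funpow_shift2 shift_space_funpow_shift) (simp add: funpow_shift)
  then have "birkhoff_sum shift2 {(x, y) \<in> X \<times> Y. x 0 \<noteq> y 0} n (x, y)
      = (\<Sum>j<n. indicator {j. x (int j) \<noteq> y (int j)} j)"
    unfolding birkhoff_sum_def by (intro sum.cong) (auto simp: indicator_def)
  also have "\<dots> = real (card {j. j < n \<and> x (int j) \<noteq> y (int j)})"
    by (simp add: indicator_def sum.If_cases Int_def)
  also have "{j. j < n \<and> x (int j) \<noteq> y (int j)} = {j. j < n \<and> subword y 0 n ! j \<noteq> subword x 0 n ! j}"
    by auto
  finally show ?thesis
    by (simp add: hamming_def)
qed

lemma R_words_antimono: "\<epsilon> \<le> \<epsilon>' \<Longrightarrow> R_words \<epsilon>' C A \<eta> \<le> R_words \<epsilon> C A \<eta>"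
  unfolding R_words_def by (rule Inf_superset_mono) auto

lemma R_rate_antimono: "\<epsilon> \<le> \<epsilon>' \<Longrightarrow> R_rate \<epsilon>' X Y \<mu> \<le> R_rate \<epsilon> X Y \<mu>"
  unfolding R_rate_def
  by (intro Liminf_mono eventually_sequentiallyI[of 1] ereal_divide_right_mono R_words_antimono) auto

lemma R_zero_eq_SUP: "R_zero X Y \<mu> = (SUP \<epsilon>\<in>{0<..}. R_rate \<epsilon> X Y \<mu>)"
proof -
  have "((\<lambda>\<epsilon>. R_rate \<epsilon> X Y \<mu>) \<longlongrightarrow> (SUP \<epsilon>\<in>{0<..}. R_rate \<epsilon> X Y \<mu>)) (at_right 0)"
  proof (rule increasing_tendsto)
    show "\<forall>\<^sub>F \<epsilon> in at_right 0. R_rate \<epsilon> X Y \<mu> \<le> (SUP \<epsilon>\<in>{0<..}. R_rate \<epsilon> X Y \<mu>)"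
      by (auto simp: eventually_at_right_field intro!: exI[of _ 1] SUP_upper)
  next
    fix l
    assume "l < (SUP \<epsilon>\<in>{0<..}. R_rate \<epsilon> X Y \<mu>)"
    then obtain \<epsilon>0 where "0 < \<epsilon>0" "l < R_rate \<epsilon>0 X Y \<mu>"
      by (auto simp: less_SUP_iff)
    then show "\<forall>\<^sub>F \<epsilon> in at_right 0. l < R_rate \<epsilon> X Y \<mu>"
      unfolding eventually_at_right_field
      by (auto intro!: exI[of _ \<epsilon>0] elim!: less_le_trans intro: R_rate_antimono)
  qed
  then show ?thesis
    unfolding R_zero_def by (intro tendsto_Lim) simp_all
qed

lemma R_words_le_of_coupling:
  fixes \<mu> :: "(int \<Rightarrow> 'a::finite) measure"
  assumes "prob_space \<mu>" "sets \<mu> = sets seq_M" "Y \<in> sets seq_M"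
    and "prob_space \<nu>" "sets \<nu> = sets (seq_M \<Otimes>\<^sub>M seq_M)" "emeasure \<nu> (X \<times> Y) = 1"
    and marginal: "\<And>A. A \<in> sets seq_M \<Longrightarrow> A \<subseteq> Y \<Longrightarrow> measure \<nu> (X \<times> A) = measure \<mu> A"
    and "B \<in> sets \<nu>" "measure \<nu> B \<le> \<epsilon>"
    and close: "\<And>x y. x \<in> X \<Longrightarrow> y \<in> Y \<Longrightarrow> (x, y) \<notin> B \<Longrightarrow> hamming (subword y 0 n) (subword x 0 n) \<le> r"
  shows "R_words \<epsilon> (language X n) (language Y n) (marginal \<mu> n) \<le> ereal (real r)"
proof -
  interpret \<mu>: prob_space \<mu> by fact
  interpret \<nu>: prob_space \<nu> by fact
  define W where "W = language Y n \<inter> (\<Union>c\<in>language X n. hball c r)"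
  define A where "A = {y. subword y 0 n \<in> W}"
  have A_sets: "A \<in> sets seq_M"
    using measurable_sets[OF subword_measurable, of W 0 n] by (simp add: A_def space_seq_M vimage_def)
  have XY_sets: "X \<times> Y \<in> sets \<nu>"
    using \<open>emeasure \<nu> (X \<times> Y) = 1\<close> emeasure_notin_sets by fastforce
  have XA_sets: "X \<times> (Y \<inter> A) \<in> sets \<nu>"
  proof -
    have "UNIV \<times> A \<in> sets \<nu>"
      using A_sets sets.top[of seq_M] pair_measureI[of UNIV seq_M A seq_M] by (simp add: \<open>sets \<nu> = _\<close> space_seq_M)
    with XY_sets have "(X \<times> Y) \<inter> (UNIV \<times> A) \<in> sets \<nu>"
      by blast
    then show ?thesis
      by (simp add: Times_Int_Times)
  qed
  have "X \<times> Y - B \<subseteq> X \<times> (Y \<inter> A)"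
    using close by (force simp: A_def W_def hball_def subword_in_language)
  have "1 - \<epsilon> \<le> measure \<nu> (X \<times> Y) - measure \<nu> B"
    using \<open>emeasure \<nu> (X \<times> Y) = 1\<close> \<open>measure \<nu> B \<le> \<epsilon>\<close> by (simp add: \<nu>.emeasure_eq_measure)
  also have "\<dots> \<le> measure \<nu> (X \<times> Y - B)"
    using XY_sets \<open>B \<in> sets \<nu>\<close> by (simp add: \<nu>.finite_measure_Diff' \<nu>.finite_measure_mono)
  also have "\<dots> \<le> measure \<nu> (X \<times> (Y \<inter> A))"
    by (rule \<nu>.finite_measure_mono) fact+
  also have "\<dots> = measure \<mu> (Y \<inter> A)"
    using A_sets \<open>Y \<in> sets seq_M\<close> by (intro marginal) auto
  also have "\<dots> \<le> marginal \<mu> n W"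
    unfolding marginal_def using A_sets
    by (intro \<mu>.finite_measure_mono) (auto simp: A_def \<open>sets \<mu> = _\<close> sets_eq_imp_space_eq[OF \<open>sets \<mu> = _\<close>] space_seq_M)
  finally show ?thesis
    unfolding R_words_def W_def by (intro Inf_lower) blast
qed

lemma ergodic_extension_ergodic_system:
  "\<nu> \<in> ergodic_extensions X Y \<mu> \<Longrightarrow> ergodic_system \<nu> shift2"
  by (simp add: ergodic_extensions_def ergodic_system_def ergodic_system_axioms_def
      measure_preserving_system_def measure_preserving_system_axioms_def ergodic_measure_def)

lemma R_words_le_of_rare_mismatches:
  fixes X Y :: "(int \<Rightarrow> 'a::finite) set"
  assumes X: "shift_space X" and Y: "shift_space Y" and "ergodic_on Y \<mu>"
    and \<nu>: "\<nu> \<in> ergodic_extensions X Y \<mu>" and "0 \<le> a" "1 \<le> n"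
    and rare: "measure \<nu> {p \<in> space \<nu>.
      a \<le> birkhoff_sum shift2 {(x, y) \<in> X \<times> Y. x 0 \<noteq> y 0} n p / real n} \<le> \<epsilon>"
  shows "R_words \<epsilon> (language X n) (language Y n) (marginal \<mu> n) / ereal (real n) \<le> ereal a"
proof -
  define D where "D = {(x, y) \<in> X \<times> Y. x 0 \<noteq> y 0}"
  define B where "B = {p \<in> space \<nu>. a \<le> birkhoff_sum shift2 D n p / real n}"
  define r where "r = nat \<lfloor>a * real n\<rfloor>"
  interpret ergodic_system \<nu> shift2
    using \<nu> by (rule ergodic_extension_ergodic_system)
  have \<mu>: "sets \<mu> = sets seq_M" "prob_space \<mu>" "emeasure \<mu> Y = 1"
    using \<open>ergodic_on Y \<mu>\<close> by (auto simp: ergodic_on_def)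
  have \<nu>': "sets \<nu> = sets (seq_M \<Otimes>\<^sub>M seq_M)" "emeasure \<nu> (X \<times> Y) = 1"
      "\<And>A. A \<in> sets seq_M \<Longrightarrow> A \<subseteq> Y \<Longrightarrow> measure \<nu> (X \<times> A) = measure \<mu> A"
    using \<nu> by (auto simp: ergodic_extensions_def)
  have [measurable]: "D \<in> sets \<nu>"
    unfolding D_def using \<nu> by (rule mismatch_set_sets)
  have "R_words \<epsilon> (language X n) (language Y n) (marginal \<mu> n) \<le> ereal (real r)"
  proof (rule R_words_le_of_coupling[OF \<mu>(2,1) _ prob_space_axioms \<nu>'])
    show "Y \<in> sets seq_M"
      using \<mu> emeasure_notin_sets by fastforce
    show "B \<in> sets \<nu>"
      unfolding B_def by measurable
    show "measure \<nu> B \<le> \<epsilon>"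
      using rare by (simp add: B_def D_def)
    fix x y
    assume "x \<in> X" "y \<in> Y" "(x, y) \<notin> B"
    then have "real (hamming (subword y 0 n) (subword x 0 n)) < a * real n"
      using \<open>1 \<le> n\<close> birkhoff_sum_mismatch_eq_hamming[OF X Y, of x y n]
      by (auto simp: B_def D_def sets_eq_imp_space_eq[OF \<nu>'(1)] space_pair_measure space_seq_M field_simps)
    then show "hamming (subword y 0 n) (subword x 0 n) \<le> r"
      unfolding r_def by linarith
  qed
  also have "\<dots> \<le> ereal (a * real n)"
    using \<open>0 \<le> a\<close> by (simp add: r_def)
  finally have "R_words \<epsilon> (language X n) (language Y n) (marginal \<mu> n) / ereal (real n)
      \<le> ereal (a * real n) / ereal (real n)"
    using \<open>1 \<le> n\<close> by (intro ereal_divide_right_mono) auto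
  then show ?thesis
    using \<open>1 \<le> n\<close> by simp
qed

lemma R_rate_le_mismatch_probability:
  fixes X Y :: "(int \<Rightarrow> 'a::finite) set"
  assumes "shift_space X" "shift_space Y" "ergodic_on Y \<mu>"
    and \<nu>: "\<nu> \<in> ergodic_extensions X Y \<mu>" and "0 < \<epsilon>"
  shows "R_rate \<epsilon> X Y \<mu> \<le> ereal (measure \<nu> {(x, y) \<in> X \<times> Y. x 0 \<noteq> y 0})"
proof (rule ereal_le_epsilon2)
  define D where "D = {(x, y) \<in> X \<times> Y. x 0 \<noteq> y 0}"
  interpret ergodic_system \<nu> shift2
    using \<nu> by (rule ergodic_extension_ergodic_system)
  have "D \<in> sets \<nu>"
    unfolding D_def using \<nu> by (rule mismatch_set_sets)
  fix \<delta> :: real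
  assume "0 < \<delta>"
  have "(\<lambda>n. measure \<nu> {p \<in> space \<nu>. measure \<nu> D + \<delta> \<le> birkhoff_sum shift2 D n p / real n})
      \<longlonglongrightarrow> 0"
    using \<open>D \<in> sets \<nu>\<close> \<open>0 < \<delta>\<close> by (intro measure_birkhoff_average_ge_tendsto_0) auto
  then have "\<forall>\<^sub>F n in sequentially.
      measure \<nu> {p \<in> space \<nu>. measure \<nu> D + \<delta> \<le> birkhoff_sum shift2 D n p / real n} < \<epsilon>"
    using \<open>0 < \<epsilon>\<close> by (rule order_tendstoD)
  then have "\<forall>\<^sub>F n in sequentially.
      R_words \<epsilon> (language X n) (language Y n) (marginal \<mu> n) / ereal (real n) \<le> ereal (measure \<nu> D + \<delta>)"
    using eventually_ge_at_top[of "1::nat"]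
    by eventually_elim (use assms \<open>0 < \<delta>\<close> in \<open>auto simp: D_def intro!: R_words_le_of_rare_mismatches\<close>)
  then have "R_rate \<epsilon> X Y \<mu> \<le> ereal (measure \<nu> D + \<delta>)"
    unfolding R_rate_def by (intro order_trans[OF Liminf_le_Limsup Limsup_bounded]) simp_all
  then show "R_rate \<epsilon> X Y \<mu> \<le> ereal (measure \<nu> {(x, y) \<in> X \<times> Y. x 0 \<noteq> y 0}) + ereal \<delta>"
    by (simp add: D_def)
qed

theorem proposition21:
  fixes X Y :: "(int \<Rightarrow> 'a::finite) set" and \<mu> :: "(int \<Rightarrow> 'a) measure"
  assumes "shift_space X" and "shift_space Y" and "ergodic_on Y \<mu>"
  shows "R_zero X Y \<mu> \<le>
    Inf {ereal (measure \<nu> {(x, y) \<in> X \<times> Y. x 0 \<noteq> y 0}) | \<nu>. \<nu> \<in> ergodic_extensions X Y \<mu>}"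
  unfolding R_zero_eq_SUP
  using R_rate_le_mismatch_probability[OF assms]
  by (auto intro!: Inf_greatest SUP_least)

end
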